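(* For integers $a_1,a_2,D$ with $D\neq0$, $\varepsilon>0$ and $z$ in the complex upper half-plane, set \[\sigma_\varepsilon(z;a_1,a_2,D)=\sum_{\substack{(m,n)\in\mathbf{Z}^2\\ a_1+Dm\neq0}}\frac{1}{(z(a_1+Dm)+a_2+Dn)^2\,|z(a_1+Dm)+a_2+Dn|^{2\varepsilon}}.\] Then $\lim_{\mathrm{Im}(z)\to\infty}\lim_{\varepsilon\to0^+}\sigma_\varepsilon(z;a_1,a_2,D)=0$. *)

theory Defs
  imports "HOL-Analysis.Analysis"
begin

definition sigma_eps :: "real \<Rightarrow> complex \<Rightarrow> int \<Rightarrow> int \<Rightarrow> int \<Rightarrow> complex" where
  "sigma_eps eps z a1 a2 D =
     (\<Sum>\<^sub>\<infinity>(m, n) \<in> {(m::int, n::int). a1 + D * m \<noteq> 0}.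
        (let w = z * of_int (a1 + D * m) + of_int (a2 + D * n)
         in 1 / (w ^ 2 * complex_of_real (cmod w powr (2 * eps)))))"

end

theory Submission
  imports Defs "HOL-Probability.Sinc_Integral"
begin

(*
  Fix m and put Y = Im z * (a1 + D m). The row sum over n is the sum of
  phi(t) = 1 / ((t + iY)^2 |t + iY|^(2e)) over the lattice Re z * (a1 + D m) + a2 + D Z.
  Comparing it with the integral gives (1/|D|) * integral phi up to an error O(|Y|^(-2-2e)),
  and integrating by parts gives integral phi = -2e |Y|^(-1-2e) J(e) with J continuous at 0.
  Summed over m, these main terms are -2 J(e) Im(z)^(-1-2e) / |D| * e zeta(1+2e), where
  zeta(s) = sum of |a1 + D m|^(-s) and e zeta(1+2e) -> 1/|D|; the remainders are bounded by
  C Im(z)^(-2) |a1 + D m|^(-2) uniformly in e, so dominated convergence applies. Hence the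
  limit L(z) exists, and |L(z)| = O(Im(z)^(-1)) as Im z -> infinity.
*)

section \<open>Lattice sums and integrals\<close>

lemma norm_sub_cell_average_le:
  fixes \<phi> \<phi>' :: "real \<Rightarrow> 'a::euclidean_space"
  assumes deriv: "\<And>t. (\<phi> has_vector_derivative \<phi>' t) (at t)"
    and cont: "continuous_on UNIV \<phi>'"
    and h: "h > 0" and int: "integrable lborel \<phi>" and int': "integrable lborel \<phi>'"
  shows "norm (\<phi> a - (1/h) *\<^sub>R (LINT x:{a..<a+h}|lborel. \<phi> x))
           \<le> (LINT x:{a..<a+h}|lborel. norm (\<phi>' x))"
proof -
  define V where "V = (LINT x:{a..<a+h}|lborel. norm (\<phi>' x))"
  have close: "norm (\<phi> a - \<phi> x) \<le> V" if x: "x \<in> {a..<a+h}" for x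
  proof -
    have "\<phi> x - \<phi> a = (LBINT t. indicator {a..x} t *\<^sub>R \<phi>' t)"
      using x by (intro integral_FTC_atLeastAtMost[symmetric])
        (auto intro: has_vector_derivative_at_within deriv continuous_on_subset[OF cont])
    then have "norm (\<phi> a - \<phi> x) \<le> (LBINT t. norm (indicator {a..x} t *\<^sub>R \<phi>' t))"
      by (metis integral_norm_bound norm_minus_commute)
    also have "\<dots> \<le> V" unfolding V_def set_lebesgue_integral_def
      using x by (intro integral_mono integrable_mult_indicator integrable_norm int')
        (auto split: split_indicator)
    finally show ?thesis .
  qed
  have int_cell: "set_integrable lborel {a..<a+h} \<phi>" "set_integrable lborel {a..<a+h} (\<lambda>_. \<phi> a)"
    using h int by (auto simp: set_integrable_def emeasure_lborel_Ico
        intro!: integrable_mult_indicator integrable_scaleR_left integrable_real_indicator)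
  have "\<phi> a - (1/h) *\<^sub>R (LINT x:{a..<a+h}|lborel. \<phi> x)
        = (1/h) *\<^sub>R (LINT x:{a..<a+h}|lborel. \<phi> a - \<phi> x)"
    using h int_cell by (simp add: set_integral_diff set_integral_const emeasure_lborel_Ico algebra_simps)
  also have "norm \<dots> \<le> (1/h) * (LINT x:{a..<a+h}|lborel. norm (\<phi> a - \<phi> x))"
    using h set_integral_norm_bound[OF set_integral_diff(1)[OF int_cell(2,1)]] by (simp add: divide_right_mono)
  also have "\<dots> \<le> (1/h) * (LINT x:{a..<a+h}|lborel. V)"
    using h int_cell close
    by (intro mult_left_mono set_integral_mono set_integrable_norm set_integral_diff(1))
       (auto simp: set_integrable_def emeasure_lborel_Ico intro!: integrable_real_indicator)
  also have "\<dots> = V" using h by (simp add: set_integral_const emeasure_lborel_Ico)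
  finally show ?thesis unfolding V_def .
qed

lemma has_sum_set_integral_disjoint_family:
  fixes f :: "_ \<Rightarrow> 'a::{banach, second_countable_topology}"
  assumes meas: "\<And>i::nat. A i \<in> sets M" and disj: "disjoint_family A"
    and int: "set_integrable M (\<Union>i. A i) f"
  shows "((\<lambda>i. LINT x:A i|M. f x) has_sum (LINT x:(\<Union>i. A i)|M. f x)) UNIV"
proof -
  have int_A: "set_integrable M (A i) f" for i
    using int by (rule set_integrable_subset) (auto simp: meas)
  have "summable (\<lambda>i. LINT x:A i|M. norm (f x))"
  proof (rule summableI_nonneg_bounded)
    show "0 \<le> (LINT x:A i|M. norm (f x))" for i
      unfolding set_lebesgue_integral_def by (intro integral_nonneg_AE) auto
    have "(\<Sum>i<n. LINT x:A i|M. norm (f x)) = (LINT x:(\<Union>i<n. A i)|M. norm (f x))" for n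
      using disj int_A meas
      by (subst set_integral_finite_Union) (auto simp: set_integrable_norm disjoint_family_on_def)
    also have "\<dots> n \<le> (LINT x:(\<Union>i. A i)|M. norm (f x))" for n
      using set_integrable_norm[OF int] set_integrable_norm[OF int_A] meas
      unfolding set_lebesgue_integral_def set_integrable_def
      by (intro integral_mono set_integrable_UN[of "{..<n}", unfolded set_integrable_def])
        (auto split: split_indicator)
    finally show "(\<Sum>i<n. LINT x:A i|M. norm (f x)) \<le> (LINT x:(\<Union>i. A i)|M. norm (f x))" for n .
  qed
  then have summ: "summable (\<lambda>i. norm (LINT x:A i|M. f x))"
    by (rule summable_comparison_test'[where N=0]) (simp add: set_integral_norm_bound int_A)
  have "(\<lambda>i. LINT x:A i|M. f x) sums (LINT x:(\<Union>i. A i)|M. f x)"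
    using disj by (subst lebesgue_integral_countable_add[OF meas _ int])
      (auto simp: disjoint_family_on_def intro: summable_sums summable_norm_cancel[OF summ])
  then show ?thesis
    by (rule norm_summable_imp_has_sum[OF summ])
qed

lemma has_sum_integral_int_cells:
  fixes f :: "real \<Rightarrow> 'a::{banach, second_countable_topology}"
  assumes int: "integrable lborel f" and h: "h > 0"
  shows "((\<lambda>k::int. LINT x:{c + h * k..<c + h * k + h}|lborel. f x) has_sum (LBINT x. f x)) UNIV"
proof -
  define I where "I k = {c + h * of_int k..<c + h * of_int k + h}" for k :: int
  have I_iff: "x \<in> I k \<longleftrightarrow> k = \<lfloor>(x - c) / h\<rfloor>" for x k
  proof -
    have "x \<in> I k \<longleftrightarrow> of_int k \<le> (x - c) / h \<and> (x - c) / h < of_int k + 1"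
      using h by (auto simp: I_def field_simps)
    then show ?thesis by (metis floor_eq_iff)
  qed
  have disj: "disjoint_family (I \<circ> int_decode)"
    by (auto simp: disjoint_family_on_def I_iff) (metis inj_int_decode injD)
  have cover: "(\<Union>i. (I \<circ> int_decode) i) = UNIV"
  proof (intro set_eqI iffI UNIV_I)
    fix x
    obtain i where "int_decode i = \<lfloor>(x - c) / h\<rfloor>" by (metis surj_int_decode surjD)
    then show "x \<in> (\<Union>i. (I \<circ> int_decode) i)" by (auto simp: I_iff)
  qed
  have "((\<lambda>i. LINT x:(I \<circ> int_decode) i|lborel. f x)
      has_sum (LINT x:(\<Union>i. (I \<circ> int_decode) i)|lborel. f x)) UNIV"
    by (rule has_sum_set_integral_disjoint_family[OF _ disj])
      (auto simp only: cover set_integrable_def indicator_UNIV scaleR_one int, simp add: I_def)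
  then have "((\<lambda>i. LINT x:(I \<circ> int_decode) i|lborel. f x) has_sum (LBINT x. f x)) UNIV"
    by (simp only: cover set_lebesgue_integral_def indicator_UNIV scaleR_one)
  then show ?thesis
    unfolding I_def[symmetric] by (simp add: has_sum_reindex_bij_betw[OF bij_int_decode, of "\<lambda>k. LINT x:I k|lborel. f x"] comp_def)
qed

lemma infsum_norm_diff_le_of_has_sum:
  fixes a b :: "'i \<Rightarrow> 'a::banach"
  assumes b: "(b has_sum B) A" and q: "(q has_sum Q) A"
    and close: "\<And>k. k \<in> A \<Longrightarrow> norm (a k - b k) \<le> q k"
  shows "a summable_on A" and "norm (infsum a A - B) \<le> Q"
proof -
  have d: "(\<lambda>k. norm (a k - b k)) summable_on A"
    using close by (rule Infinite_Sum.abs_summable_on_comparison_test'[OF has_sum_imp_summable[OF q]])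
  have sd: "(\<lambda>k. a k - b k) summable_on A"
    using d by (rule abs_summable_summable)
  then show "a summable_on A"
    using summable_on_add[OF sd has_sum_imp_summable[OF b]] by simp
  have "infsum a A - B = (\<Sum>\<^sub>\<infinity>k\<in>A. a k - b k)"
    using infsum_add[OF sd has_sum_imp_summable[OF b]] infsumI[OF b] by simp
  also have "norm \<dots> \<le> (\<Sum>\<^sub>\<infinity>k\<in>A. norm (a k - b k))"
    using d by (rule norm_infsum_bound)
  also have "\<dots> \<le> Q"
    using infsum_mono[OF d has_sum_imp_summable[OF q] close] infsumI[OF q] by simp
  finally show "norm (infsum a A - B) \<le> Q" .
qed

(* Each lattice value is compared with the average of phi over the cell of length h to its right. *)
lemma lattice_sum_integral_estimate:
  fixes \<phi> \<phi>' :: "real \<Rightarrow> 'a::euclidean_space"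
  assumes deriv: "\<And>t. (\<phi> has_vector_derivative \<phi>' t) (at t)"
    and cont: "continuous_on UNIV \<phi>'"
    and h: "h > 0" and int: "integrable lborel \<phi>" and int': "integrable lborel \<phi>'"
  shows "(\<lambda>n::int. norm (\<phi> (c + h * n))) summable_on UNIV"
    and "norm ((\<Sum>\<^sub>\<infinity>n::int. \<phi> (c + h * n)) - (1/h) *\<^sub>R (LBINT x. \<phi> x))
           \<le> (LBINT x. norm (\<phi>' x))"
    and "(\<Sum>\<^sub>\<infinity>n::int. norm (\<phi> (c + h * n)))
           \<le> (1/h) * (LBINT x. norm (\<phi> x)) + (LBINT x. norm (\<phi>' x))"
proof -
  define cell where "cell k = {c + h * of_int k..<c + h * of_int k + h}" for k :: int
  define P where "P k = (LINT x:cell k|lborel. \<phi> x)" for k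
  define Q where "Q k = (LINT x:cell k|lborel. norm (\<phi>' x))" for k
  define R where "R k = (LINT x:cell k|lborel. norm (\<phi> x))" for k
  have P: "((\<lambda>k. (1/h) *\<^sub>R P k) has_sum (1/h) *\<^sub>R (LBINT x. \<phi> x)) UNIV"
    unfolding P_def cell_def by (intro has_sum_scaleR has_sum_integral_int_cells int h)
  have Q: "(Q has_sum (LBINT x. norm (\<phi>' x))) UNIV"
    unfolding Q_def cell_def by (intro has_sum_integral_int_cells integrable_norm int' h)
  have R: "(R has_sum (LBINT x. norm (\<phi> x))) UNIV"
    unfolding R_def cell_def by (intro has_sum_integral_int_cells integrable_norm int h)
  have close: "norm (\<phi> (c + h * k) - (1/h) *\<^sub>R P k) \<le> Q k" for k
    unfolding P_def Q_def cell_def by (rule norm_sub_cell_average_le[OF deriv cont h int int'])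
  show "norm ((\<Sum>\<^sub>\<infinity>n::int. \<phi> (c + h * n)) - (1/h) *\<^sub>R (LBINT x. \<phi> x))
           \<le> (LBINT x. norm (\<phi>' x))"
    using close by (intro infsum_norm_diff_le_of_has_sum(2)[OF P Q])
  have bound: "norm (\<phi> (c + h * k)) \<le> (1/h) * R k + Q k" for k
  proof -
    have "norm (P k) \<le> R k"
      unfolding P_def R_def cell_def
      by (intro set_integral_norm_bound) (auto simp: set_integrable_def intro: integrable_mult_indicator int)
    then have "norm ((1/h) *\<^sub>R P k) \<le> (1/h) * R k"
      using h by (simp add: divide_right_mono)
    then show ?thesis
      using close[of k] norm_triangle_sub[of "\<phi> (c + h * k)" "(1/h) *\<^sub>R P k"] by linarith
  qed
  have RQ: "((\<lambda>k. (1/h) * R k + Q k) has_sum (1/h) * (LBINT x. norm (\<phi> x)) + (LBINT x. norm (\<phi>' x))) UNIV"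
    by (intro has_sum_add has_sum_cmult_right R Q)
  show summ: "(\<lambda>n::int. norm (\<phi> (c + h * n))) summable_on UNIV"
    using bound by (intro Infinite_Sum.abs_summable_on_comparison_test'[OF has_sum_imp_summable[OF RQ]])
  show "(\<Sum>\<^sub>\<infinity>n::int. norm (\<phi> (c + h * n)))
           \<le> (1/h) * (LBINT x. norm (\<phi> x)) + (LBINT x. norm (\<phi>' x))"
    using infsum_mono[OF summ has_sum_imp_summable[OF RQ] bound] infsumI[OF RQ] by simp
qed

lemma infsum_int_lattice_abs:
  fixes f :: "real \<Rightarrow> 'a::{comm_monoid_add, t2_space}" and c :: real and D :: int
  shows "(\<lambda>n::int. f (c + D * n)) summable_on UNIV \<longleftrightarrow> (\<lambda>n::int. f (c + \<bar>D\<bar> * n)) summable_on UNIV"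
    and "(\<Sum>\<^sub>\<infinity>n::int. f (c + D * n)) = (\<Sum>\<^sub>\<infinity>n::int. f (c + \<bar>D\<bar> * n))"
proof -
  define \<sigma> where "\<sigma> n = (if D < 0 then - n else n)" for n :: int
  have bij: "bij_betw \<sigma> UNIV UNIV"
    by (rule bij_betwI[of _ _ _ \<sigma>]) (auto simp: \<sigma>_def)
  have "(\<lambda>n::int. f (c + D * n)) = (\<lambda>n. f (c + \<bar>D\<bar> * n)) \<circ> \<sigma>"
    by (auto simp: \<sigma>_def)
  then show "(\<lambda>n::int. f (c + D * n)) summable_on UNIV \<longleftrightarrow> (\<lambda>n::int. f (c + \<bar>D\<bar> * n)) summable_on UNIV"
    and "(\<Sum>\<^sub>\<infinity>n::int. f (c + D * n)) = (\<Sum>\<^sub>\<infinity>n::int. f (c + \<bar>D\<bar> * n))"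
    using summable_on_reindex_bij_betw[OF bij] infsum_reindex_bij_betw[OF bij] by (simp_all add: comp_def)
qed


lemma integral_eq_0_if_antiderivative_vanishes:
  fixes H h :: "real \<Rightarrow> 'a::euclidean_space"
  assumes deriv: "\<And>t. (H has_vector_derivative h t) (at t)"
    and cont: "continuous_on UNIV h" and int: "integrable lborel h"
    and top: "(H \<longlongrightarrow> 0) at_top" and bot: "(H \<longlongrightarrow> 0) at_bot"
  shows "(LBINT t. h t) = 0"
proof -
  have "((\<lambda>R. LBINT t. indicator {-R..R} t *\<^sub>R h t) \<longlongrightarrow> (LBINT t. h t)) at_top"
  proof (rule integral_dominated_convergence_at_top[where w="\<lambda>t. norm (h t)"])
    show "AE x in lborel. ((\<lambda>R. indicator {-R..R} x *\<^sub>R h x) \<longlongrightarrow> h x) at_top"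
    proof (rule AE_I2, rule tendsto_eventually)
      show "\<forall>\<^sub>F R in at_top. indicator {-R..R} x *\<^sub>R h x = h x" for x
        using eventually_ge_at_top[of "\<bar>x\<bar>"] by eventually_elim (auto simp: indicator_def)
    qed
  qed (use int in \<open>auto simp: indicator_def intro!: borel_measurable_integrable integrable_mult_indicator\<close>)
  moreover have "((\<lambda>R. LBINT t. indicator {-R..R} t *\<^sub>R h t) \<longlongrightarrow> 0 - 0) at_top"
  proof (rule Lim_transform_eventually)
    show "((\<lambda>R. H R - H (-R)) \<longlongrightarrow> 0 - 0) at_top"
      by (intro tendsto_diff top filterlim_compose[OF bot filterlim_uminus_at_bot_at_top])
    show "\<forall>\<^sub>F R in at_top. H R - H (-R) = (LBINT t. indicator {-R..R} t *\<^sub>R h t)"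
      using eventually_ge_at_top[of 0]
      by eventually_elim (intro integral_FTC_atLeastAtMost[symmetric],
          auto intro: has_vector_derivative_at_within deriv continuous_on_subset[OF cont])
  qed
  ultimately show ?thesis
    using tendsto_unique[OF trivial_limit_at_top_linorder] by force
qed

lemma integral_inverse_square_plus_square:
  fixes Y :: real assumes Y: "Y \<noteq> 0"
  shows "integrable lborel (\<lambda>t. 1 / (t\<^sup>2 + Y\<^sup>2))" and "(LBINT t. 1 / (t\<^sup>2 + Y\<^sup>2)) = pi / \<bar>Y\<bar>"
proof -
  have UNIV: "einterval (-\<infinity>) \<infinity> = (UNIV :: real set)" by (auto simp: einterval_def)
  have scale: "1 / ((0 + Y * x)\<^sup>2 + Y\<^sup>2) = (1 / Y\<^sup>2) * inverse (1 + x\<^sup>2)" for x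
    using Y by (simp add: field_simps power_mult_distrib)
  have "integrable lborel (\<lambda>x. (1 / Y\<^sup>2) * inverse (1 + x\<^sup>2))"
    using integrable_inverse_1_plus_square unfolding UNIV set_integrable_def by simp
  then show "integrable lborel (\<lambda>t. 1 / (t\<^sup>2 + Y\<^sup>2))"
    using lborel_integrable_real_affine_iff[OF Y, of "\<lambda>t. 1 / (t\<^sup>2 + Y\<^sup>2)" 0] by (simp only: scale)
  have "(LBINT t. 1 / (t\<^sup>2 + Y\<^sup>2)) = \<bar>Y\<bar> * ((1 / Y\<^sup>2) * pi)"
    using lborel_integral_real_affine[OF Y, of "\<lambda>t. 1 / (t\<^sup>2 + Y\<^sup>2)" 0] LBINT_inverse_1_plus_square
    unfolding scale interval_lebesgue_integral_def UNIV set_lebesgue_integral_def by simp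
  also have "\<dots> = pi / \<bar>Y\<bar>"
    using Y by (simp add: field_simps power2_eq_square abs_mult_self_eq)
  finally show "(LBINT t. 1 / (t\<^sup>2 + Y\<^sup>2)) = pi / \<bar>Y\<bar>" .
qed

lemma integrable_bounded_by_inverse_square:
  fixes f :: "real \<Rightarrow> 'a::{banach, second_countable_topology}"
  assumes Y: "Y \<noteq> 0" and cont: "continuous_on UNIV f"
    and bound: "\<And>t. norm (f t) \<le> C / (t\<^sup>2 + Y\<^sup>2)"
  shows "integrable lborel f" and "(LBINT t. norm (f t)) \<le> C * pi / \<bar>Y\<bar>"
proof -
  have int: "integrable lborel (\<lambda>t. C * (1 / (t\<^sup>2 + Y\<^sup>2)))"
    by (intro integrable_mult_right integral_inverse_square_plus_square(1) Y)
  show f: "integrable lborel f"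
  proof (rule Bochner_Integration.integrable_bound[OF int])
    show "f \<in> borel_measurable lborel"
      using cont by (simp add: borel_measurable_continuous_onI)
    show "AE t in lborel. norm (f t) \<le> norm (C * (1 / (t\<^sup>2 + Y\<^sup>2)))"
      by (intro AE_I2 order_trans[OF bound]) (simp add: divide_right_mono)
  qed
  have "(LBINT t. norm (f t)) \<le> (LBINT t. C * (1 / (t\<^sup>2 + Y\<^sup>2)))"
    using bound by (intro integral_mono integrable_norm f int) simp
  also have "\<dots> = C * pi / \<bar>Y\<bar>"
    by (subst integral_mult_right_zero) (simp add: integral_inverse_square_plus_square(2)[OF Y])
  finally show "(LBINT t. norm (f t)) \<le> C * pi / \<bar>Y\<bar>" .
qed


section \<open>Dominated convergence for unconditional sums\<close>

lemma summable_on_tail_small: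
  fixes M :: "'a \<Rightarrow> real"
  assumes M: "M summable_on A" and \<delta>: "\<delta> > 0"
  obtains X where "finite X" "X \<subseteq> A" "infsum M (A - X) < \<delta>"
proof -
  have "\<forall>\<^sub>F X in finite_subsets_at_top A. dist (sum M X) (infsum M A) < \<delta>"
    using infsum_tendsto[OF M] \<delta> by (rule tendstoD)
  then obtain X where X: "finite X" "X \<subseteq> A" "dist (sum M X) (infsum M A) < \<delta>"
    unfolding eventually_finite_subsets_at_top by blast
  have "infsum M A = sum M X + infsum M (A - X)"
    using infsum_Un_disjoint[OF _ summable_on_subset_banach[OF M], of X "A - X"] X
    by (simp add: Un_absorb1)
  with X show ?thesis by (intro that) (auto simp: dist_real_def)
qed

lemma norm_infsum_le_sum_plus_tail:
  fixes d :: "'a \<Rightarrow> 'c::banach"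
  assumes W: "W summable_on A" and d: "\<And>k. k \<in> A \<Longrightarrow> norm (d k) \<le> W k"
    and X: "finite X" "X \<subseteq> A"
  shows "norm (infsum d A) \<le> norm (sum d X) + infsum W (A - X)"
proof -
  have nd: "(\<lambda>k. norm (d k)) summable_on (A - X)"
    using Infinite_Sum.abs_summable_on_comparison_test'[OF W d] by (rule summable_on_subset_banach) auto
  have split: "infsum d A = sum d X + infsum d (A - X)"
    using infsum_Un_disjoint[OF _ abs_summable_summable[OF nd], of X] X by (simp add: Un_absorb1)
  have "norm (infsum d (A - X)) \<le> infsum W (A - X)"
    using d by (intro order_trans[OF norm_infsum_bound[OF nd]] infsum_mono nd
        summable_on_subset_banach[OF W]) auto
  then show ?thesis
    unfolding split using norm_triangle_ineq[of "sum d X" "infsum d (A - X)"] by linarith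
qed

lemma tendsto_infsum_dominated:
  fixes f :: "'b \<Rightarrow> 'a \<Rightarrow> 'c::banach" and M :: "'a \<Rightarrow> real"
  assumes M: "M summable_on A"
    and bound: "\<forall>\<^sub>F e in F. \<forall>k\<in>A. norm (f e k) \<le> M k"
    and lim: "\<And>k. k \<in> A \<Longrightarrow> ((\<lambda>e. f e k) \<longlongrightarrow> g k) F"
  shows "((\<lambda>e. infsum (f e) A) \<longlongrightarrow> infsum g A) F"
proof (cases "F = bot")
  case False
  have g_bound: "norm (g k) \<le> M k" if k: "k \<in> A" for k
    by (rule tendsto_upperbound[OF tendsto_norm[OF lim[OF k]] _ False])
      (use bound k in \<open>auto elim: eventually_mono\<close>)
  have g: "g summable_on A"
    by (rule abs_summable_summable, rule Infinite_Sum.abs_summable_on_comparison_test'[OF M g_bound])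
  have M2: "(\<lambda>k. 2 * M k) summable_on A"
    using M by (rule summable_on_cmult_right)
  show ?thesis
  proof (rule tendstoI)
    fix \<delta> :: real assume \<delta>: "\<delta> > 0"
    obtain X where X: "finite X" "X \<subseteq> A" and tail: "infsum M (A - X) < \<delta>/3"
      using summable_on_tail_small[OF M, of "\<delta>/3"] \<delta> by auto
    have "((\<lambda>e. \<Sum>k\<in>X. f e k - g k) \<longlongrightarrow> (\<Sum>k\<in>X. g k - g k)) F"
      using X by (intro tendsto_sum tendsto_diff lim tendsto_const) auto
    then have head: "\<forall>\<^sub>F e in F. norm (\<Sum>k\<in>X. f e k - g k) < \<delta>/3"
      using \<delta> by (auto dest: tendstoD[of _ 0 _ "\<delta>/3"] simp: dist_norm)
    show "\<forall>\<^sub>F e in F. dist (infsum (f e) A) (infsum g A) < \<delta>"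
      using head bound
    proof eventually_elim
      case (elim e)
      have diff: "norm (f e k - g k) \<le> 2 * M k" if "k \<in> A" for k
        using elim(2) g_bound[OF that] norm_triangle_ineq4[of "f e k" "g k"] that by auto
      have sd: "(\<lambda>k. f e k - g k) summable_on A"
        by (rule abs_summable_summable, rule Infinite_Sum.abs_summable_on_comparison_test'[OF M2 diff])
      have "infsum (f e) A - infsum g A = (\<Sum>\<^sub>\<infinity>k\<in>A. f e k - g k)"
        using infsum_add[OF sd g] by simp
      then have "dist (infsum (f e) A) (infsum g A) \<le> norm (\<Sum>k\<in>X. f e k - g k) + 2 * infsum M (A - X)"
        using norm_infsum_le_sum_plus_tail[OF M2 diff X] by (simp add: dist_norm infsum_cmult_right')
      then show ?case using elim(1) tail by linarith
    qed
  qed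
qed simp


section \<open>Zeta functions of arithmetic progressions\<close>

lemma powr_arith_prog_antiderivative_bounds:
  fixes r d s x :: real
  assumes r: "r > 0" and d: "d > 0" and s: "s > 1" and x: "x \<ge> 0"
  defines "F \<equiv> \<lambda>x. (r + d * x) powr (1 - s) / (d * (s - 1))"
  shows "(r + d * (x + 1)) powr (-s) \<le> F x - F (x + 1)"
    and "F x - F (x + 1) \<le> (r + d * x) powr (-s)"
proof -
  have deriv: "(F has_real_derivative - ((r + d * y) powr - s)) (at y)" if "y \<ge> 0" for y
  proof -
    have pos: "r + d * y > 0" using that r d by (simp add: add_pos_nonneg)
    have "(F has_real_derivative (1 - s) * (r + d * y) powr (1 - s - 1) * d / (d * (s - 1))) (at y)"
      unfolding F_def using pos s by (auto intro!: derivative_eq_intros)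
    moreover have "(1 - s) * (r + d * y) powr (1 - s - 1) * d / (d * (s - 1)) = - ((r + d * y) powr - s)"
      using d s by (simp add: field_simps)
    ultimately show ?thesis by simp
  qed
  obtain z where z: "x < z" "z < x + 1" "F (x + 1) - F x = - ((r + d * z) powr (-s))"
    using MVT2[of x "x + 1" F "\<lambda>y. - ((r + d * y) powr (-s))"] deriv x by force
  have "(r + d * (x + 1)) powr (-s) \<le> (r + d * z) powr (-s)"
       "(r + d * z) powr (-s) \<le> (r + d * x) powr (-s)"
    using z r d s x by (auto intro!: powr_mono2' add_pos_nonneg)
  then show "(r + d * (x + 1)) powr (-s) \<le> F x - F (x + 1)" "F x - F (x + 1) \<le> (r + d * x) powr (-s)"
    using z(3) by simp_all
qed

definition arith_prog_zeta :: "real \<Rightarrow> real \<Rightarrow> real \<Rightarrow> real" where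
  "arith_prog_zeta r d s = (\<Sum>k. (r + d * real k) powr - s)"

lemma arith_prog_zeta_bounds:
  fixes r d s :: real
  assumes r: "r > 0" and d: "d > 0" and s: "s > 1"
  shows "summable (\<lambda>k. (r + d * real k) powr - s)"
    and "r powr (1 - s) / (d * (s - 1)) \<le> arith_prog_zeta r d s"
    and "arith_prog_zeta r d s \<le> r powr (1 - s) / (d * (s - 1)) + r powr - s"
proof -
  define f where "f x = (r + d * x) powr (-s)" for x :: real
  define F where "F x = (r + d * x) powr (1 - s) / (d * (s - 1))" for x :: real
  note step = powr_arith_prog_antiderivative_bounds[OF r d s, of "real k" for k, folded F_def f_def]
  have telescope: "(\<Sum>k<N. F (real k) - F (real k + 1)) = F 0 - F (real N)" for N
    using sum_lessThan_telescope'[of "\<lambda>k. F (real k)" N] by (simp add: add.commute)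
  have F_nonneg: "F x \<ge> 0" for x using d s by (simp add: F_def)
  have upper: "(\<Sum>k<N. f (Suc k)) \<le> F 0" for N
    using sum_mono[of "{..<N}" "\<lambda>k. f (Suc k)" "\<lambda>k. F (real k) - F (real k + 1)"] step(1) telescope[of N] F_nonneg[of N]
    by (simp add: add.commute)
  have summ_Suc: "summable (\<lambda>k. f (Suc k))"
    using upper by (intro summableI_nonneg_bounded[of _ "F 0"]) (auto simp: f_def)
  then have summ: "summable (\<lambda>k. f (real k))"
    by (subst summable_Suc_iff[symmetric])
  then show "summable (\<lambda>k. (r + d * real k) powr - s)" by (simp add: f_def)
  have "(\<Sum>k. f (real k)) = f 0 + (\<Sum>k. f (Suc k))"
    using suminf_split_head[OF summ] by simp
  also have "\<dots> \<le> f 0 + F 0"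
    using suminf_le_const[OF summ_Suc upper] by simp
  finally show "arith_prog_zeta r d s \<le> r powr (1 - s) / (d * (s - 1)) + r powr - s"
    by (simp add: f_def F_def arith_prog_zeta_def)
  have "(\<lambda>N. F (real N)) \<longlonglongrightarrow> 0"
  proof -
    have "filterlim (\<lambda>N::nat. r + d * N) at_top sequentially"
      using d by (intro filterlim_tendsto_add_at_top[OF tendsto_const]
          filterlim_tendsto_pos_mult_at_top[OF tendsto_const d filterlim_real_sequentially])
    then have "(\<lambda>N::nat. (r + d * N) powr (1 - s)) \<longlonglongrightarrow> 0"
      using s by (intro tendsto_neg_powr) auto
    then show ?thesis unfolding F_def by (intro tendsto_divide_zero)
  qed
  then have "(\<lambda>N. F 0 - F (real N)) \<longlonglongrightarrow> F 0"
    by (auto intro: tendsto_eq_intros)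
  moreover have "F 0 - F (real N) \<le> (\<Sum>k<N. f (real k))" for N
    using sum_mono[of "{..<N}" "\<lambda>k. F (real k) - F (real k + 1)" "\<lambda>k. f (real k)"] step(2) telescope[of N] by simp
  ultimately have "F 0 \<le> (\<Sum>k. f (real k))"
    by (intro LIMSEQ_le[OF _ summable_LIMSEQ[OF summ]]) auto
  then show "r powr (1 - s) / (d * (s - 1)) \<le> arith_prog_zeta r d s"
    by (simp add: f_def F_def arith_prog_zeta_def)
qed

lemma tendsto_mult_arith_prog_zeta:
  fixes r d :: real
  assumes r: "r > 0" and d: "d > 0"
  shows "((\<lambda>e. e * arith_prog_zeta r d (1 + 2 * e)) \<longlongrightarrow> 1 / (2 * d)) (at_right 0)"
proof (rule tendsto_sandwich)
  define lo where "lo e = r powr (- 2 * e) / (2 * d)" for e :: real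
  have bounds: "lo e \<le> e * arith_prog_zeta r d (1 + 2 * e)"
    "e * arith_prog_zeta r d (1 + 2 * e) \<le> lo e + e * r powr - (1 + 2 * e)" if e: "e > 0" for e
  proof -
    have lo: "e * (r powr (1 - (1 + 2 * e)) / (d * (1 + 2 * e - 1))) = lo e"
      using e d by (simp add: lo_def)
    show "lo e \<le> e * arith_prog_zeta r d (1 + 2 * e)"
      using mult_left_mono[OF arith_prog_zeta_bounds(2)[OF r d, of "1 + 2 * e"], of e] e
      unfolding lo by simp
    show "e * arith_prog_zeta r d (1 + 2 * e) \<le> lo e + e * r powr - (1 + 2 * e)"
      using mult_left_mono[OF arith_prog_zeta_bounds(3)[OF r d, of "1 + 2 * e"], of e] e
      unfolding distrib_left lo by simp
  qed
  show "\<forall>\<^sub>F e in at_right 0. lo e \<le> e * arith_prog_zeta r d (1 + 2 * e)"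
       "\<forall>\<^sub>F e in at_right 0. e * arith_prog_zeta r d (1 + 2 * e) \<le> lo e + e * r powr - (1 + 2 * e)"
    using bounds eventually_at_right_less[of 0] by (auto elim: eventually_mono)
  have "(lo \<longlongrightarrow> 1 / (2 * d)) (at_right 0)"
    unfolding lo_def using r d by (auto intro!: tendsto_eq_intros)
  then show "(lo \<longlongrightarrow> 1 / (2 * d)) (at_right 0)"
    "((\<lambda>e. lo e + e * r powr - (1 + 2 * e)) \<longlongrightarrow> 1 / (2 * d)) (at_right 0)"
    using r d by (auto intro!: tendsto_eq_intros)
qed

(* With j0 the least j such that a + |D| j > 0, the positive values are a + |D| (j0 + k), taken at
   m = sgn D * (j0 + k). *)
lemma pos_int_arith_prog_reindex:
  fixes a D :: int assumes D: "D \<noteq> 0"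
  obtains r :: int and g :: "nat \<Rightarrow> int"
  where "r > 0" "bij_betw g UNIV {m. a + D * m > 0}" "\<And>k. a + D * g k = r + \<bar>D\<bar> * int k"
proof
  define d where "d = \<bar>D\<bar>"
  define j0 where "j0 = (- a) div d + 1"
  have d: "d > 0" using D by (simp add: d_def)
  have pos_iff: "a + d * j > 0 \<longleftrightarrow> j \<ge> j0" for j
  proof -
    have "(- a) div d < j \<longleftrightarrow> real_of_int (- a) / real_of_int d < real_of_int j"
      by (metis floor_divide_of_int_eq floor_less_iff)
    also have "\<dots> \<longleftrightarrow> real_of_int (- a) < real_of_int j * real_of_int d"
      by (rule pos_divide_less_eq) (use d in simp)
    also have "\<dots> \<longleftrightarrow> - a < j * d"
      by (simp only: of_int_mult[symmetric] of_int_less_iff)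
    finally show ?thesis by (auto simp: j0_def algebra_simps)
  qed
  have sgn: "D * (sgn D * j) = d * j" for j
    by (simp add: d_def abs_sgn mult.assoc)
  have sgn_sq: "sgn D * sgn D = 1" using D by (cases "D > 0") auto
  show "a + j0 * d > 0" using pos_iff[of j0] by (simp add: mult.commute)
  show "a + D * (sgn D * (j0 + int k)) = a + j0 * d + \<bar>D\<bar> * int k" for k
    unfolding distrib_left sgn by (simp add: d_def)
  show "bij_betw (\<lambda>k. sgn D * (j0 + int k)) UNIV {m. a + D * m > 0}"
  proof (rule bij_betwI[where g="\<lambda>m. nat (sgn D * m - j0)"])
    show "(\<lambda>k. sgn D * (j0 + int k)) \<in> UNIV \<rightarrow> {m. a + D * m > 0}"
      using pos_iff by (simp add: sgn)
    show "sgn D * (j0 + int (nat (sgn D * m - j0))) = m" if "m \<in> {m. a + D * m > 0}" for m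
    proof -
      have "D * m = d * (sgn D * m)"
        using sgn[of "sgn D * m"] sgn_sq by (simp add: mult.assoc[symmetric])
      then have "j0 \<le> sgn D * m" using that pos_iff[of "sgn D * m"] by (simp only: mem_Collect_eq)
      then show ?thesis using sgn_sq by (simp add: mult.assoc[symmetric])
    qed
  qed (use sgn_sq in \<open>auto simp: mult.assoc[symmetric]\<close>)
qed

lemma has_sum_powr_pos_int_arith_prog:
  fixes a D :: int assumes D: "D \<noteq> 0"
  obtains r :: real where "r > 0"
    "\<And>s. s > 1 \<Longrightarrow> ((\<lambda>m. \<bar>real_of_int (a + D * m)\<bar> powr -s)
                 has_sum arith_prog_zeta r \<bar>real_of_int D\<bar> s) {m. a + D * m > 0}"
proof -
  obtain r g where r: "r > 0" and g: "bij_betw g UNIV {m. a + D * m > 0}"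
    and val: "\<And>k. a + D * g k = r + \<bar>D\<bar> * int k"
    using pos_int_arith_prog_reindex[OF D] by blast
  show ?thesis
  proof (rule that)
    show "real_of_int r > 0" using r by simp
    fix s :: real assume s: "s > 1"
    have d: "\<bar>real_of_int D\<bar> > 0" using D by simp
    have "summable (\<lambda>k. (real_of_int r + \<bar>real_of_int D\<bar> * real k) powr -s)"
      using arith_prog_zeta_bounds(1)[OF _ d s] r by simp
    then have "((\<lambda>k. (real_of_int r + \<bar>real_of_int D\<bar> * real k) powr -s)
        has_sum arith_prog_zeta r \<bar>real_of_int D\<bar> s) UNIV"
      unfolding arith_prog_zeta_def by (intro sums_nonneg_imp_has_sum summable_sums) auto
    moreover have "\<bar>real_of_int (a + D * g k)\<bar> powr -s = (real_of_int r + \<bar>real_of_int D\<bar> * real k) powr -s" for k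
      using r unfolding val by simp
    ultimately show "((\<lambda>m. \<bar>real_of_int (a + D * m)\<bar> powr -s)
        has_sum arith_prog_zeta r \<bar>real_of_int D\<bar> s) {m. a + D * m > 0}"
      using has_sum_reindex_bij_betw[OF g, of "\<lambda>m. \<bar>real_of_int (a + D * m)\<bar> powr -s"] by simp
  qed
qed

lemma has_sum_powr_nonzero_int_arith_prog:
  fixes a D :: int assumes D: "D \<noteq> 0"
  obtains r1 r2 :: real where "r1 > 0" "r2 > 0"
    "\<And>s. s > 1 \<Longrightarrow> ((\<lambda>m. \<bar>real_of_int (a + D * m)\<bar> powr -s) has_sum
       arith_prog_zeta r1 \<bar>real_of_int D\<bar> s + arith_prog_zeta r2 \<bar>real_of_int D\<bar> s) {m. a + D * m \<noteq> 0}"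
proof -
  obtain r1 where r1: "r1 > 0" and pos: "\<And>s. s > 1 \<Longrightarrow> ((\<lambda>m. \<bar>real_of_int (a + D * m)\<bar> powr -s)
      has_sum arith_prog_zeta r1 \<bar>real_of_int D\<bar> s) {m. a + D * m > 0}"
    using has_sum_powr_pos_int_arith_prog[OF D] by blast
  obtain r2 where r2: "r2 > 0" and neg: "\<And>s. s > 1 \<Longrightarrow> ((\<lambda>m. \<bar>real_of_int (- a + - D * m)\<bar> powr -s)
      has_sum arith_prog_zeta r2 \<bar>real_of_int (- D)\<bar> s) {m. - a + - D * m > 0}"
    using has_sum_powr_pos_int_arith_prog[of "- D" "- a"] D by (metis neg_equal_0_iff_equal)
  have split: "{m. a + D * m \<noteq> 0} = {m. a + D * m > 0} \<union> {m. - a + - D * m > 0}" by auto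
  show ?thesis
  proof (rule that[OF r1 r2])
    fix s :: real assume s: "s > 1"
    have "- a + - D * m = - (a + D * m)" for m by simp
    then have "\<bar>real_of_int (- a + - D * m)\<bar> = \<bar>real_of_int (a + D * m)\<bar>" for m by simp
    then have "((\<lambda>m. \<bar>real_of_int (a + D * m)\<bar> powr -s) has_sum
        arith_prog_zeta r2 \<bar>real_of_int D\<bar> s) {m. - a + - D * m > 0}"
      using neg[OF s] by (simp only: of_int_minus abs_minus_cancel)
    then show "((\<lambda>m. \<bar>real_of_int (a + D * m)\<bar> powr -s) has_sum
        arith_prog_zeta r1 \<bar>real_of_int D\<bar> s + arith_prog_zeta r2 \<bar>real_of_int D\<bar> s) {m. a + D * m \<noteq> 0}"
      unfolding split by (rule has_sum_Un_disjoint[OF pos[OF s]]) auto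
  qed
qed

lemma nonzero_int_arith_prog_zeta:
  fixes a D :: int assumes D: "D \<noteq> 0"
  defines "Z \<equiv> \<lambda>s. \<Sum>\<^sub>\<infinity>m\<in>{m. a + D * m \<noteq> 0}. \<bar>real_of_int (a + D * m)\<bar> powr -s"
  shows "\<And>s. s > 1 \<Longrightarrow> (\<lambda>m. \<bar>real_of_int (a + D * m)\<bar> powr -s) summable_on {m. a + D * m \<noteq> 0}"
    and "((\<lambda>e. e * Z (1 + 2 * e)) \<longlongrightarrow> 1 / \<bar>real_of_int D\<bar>) (at_right 0)"
proof -
  obtain r1 r2 where r: "r1 > 0" "r2 > 0" and sum: "\<And>s. s > 1 \<Longrightarrow>
      ((\<lambda>m. \<bar>real_of_int (a + D * m)\<bar> powr -s) has_sum
       arith_prog_zeta r1 \<bar>real_of_int D\<bar> s + arith_prog_zeta r2 \<bar>real_of_int D\<bar> s) {m. a + D * m \<noteq> 0}"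
    using has_sum_powr_nonzero_int_arith_prog[OF D] by blast
  then show "\<And>s. s > 1 \<Longrightarrow> (\<lambda>m. \<bar>real_of_int (a + D * m)\<bar> powr -s) summable_on {m. a + D * m \<noteq> 0}"
    using has_sum_imp_summable by blast
  have d: "\<bar>real_of_int D\<bar> > 0" using D by simp
  have "((\<lambda>e. e * arith_prog_zeta r1 \<bar>real_of_int D\<bar> (1 + 2 * e) + e * arith_prog_zeta r2 \<bar>real_of_int D\<bar> (1 + 2 * e))
      \<longlongrightarrow> 1 / (2 * \<bar>real_of_int D\<bar>) + 1 / (2 * \<bar>real_of_int D\<bar>)) (at_right 0)"
    by (intro tendsto_add tendsto_mult_arith_prog_zeta r d)
  moreover have "\<forall>\<^sub>F e in at_right 0. e * arith_prog_zeta r1 \<bar>real_of_int D\<bar> (1 + 2 * e)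
      + e * arith_prog_zeta r2 \<bar>real_of_int D\<bar> (1 + 2 * e) = e * Z (1 + 2 * e)"
    using eventually_at_right_less[of 0]
  proof eventually_elim
    case (elim e)
    then have "Z (1 + 2 * e) = arith_prog_zeta r1 \<bar>real_of_int D\<bar> (1 + 2 * e)
        + arith_prog_zeta r2 \<bar>real_of_int D\<bar> (1 + 2 * e)"
      unfolding Z_def by (intro infsumI sum) simp
    then show ?case by (simp add: distrib_left)
  qed
  ultimately show "((\<lambda>e. e * Z (1 + 2 * e)) \<longlongrightarrow> 1 / \<bar>real_of_int D\<bar>) (at_right 0)"
    by (simp add: Lim_transform_eventually)
qed


definition eisenstein_summand :: "real \<Rightarrow> complex \<Rightarrow> complex" where
  "eisenstein_summand e w = 1 / (w\<^sup>2 * complex_of_real (cmod w powr (2 * e)))"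

lemma Complex_nonzero: "Y \<noteq> 0 \<Longrightarrow> Complex t Y \<noteq> 0"
  by (simp add: complex_eq_iff)

lemma sum_squares_pos: "Y \<noteq> 0 \<Longrightarrow> t\<^sup>2 + Y\<^sup>2 > (0::real)"
  by (simp add: add_nonneg_pos)

lemma sum_squares_powr_le:
  fixes t Y e :: real
  assumes Y: "Y \<noteq> 0" and e: "e \<ge> 0"
  shows "(t\<^sup>2 + Y\<^sup>2) powr - e \<le> \<bar>Y\<bar> powr (- 2 * e)"
proof -
  have Y2: "Y\<^sup>2 = \<bar>Y\<bar> powr (2::real)"
    using Y by (simp add: powr_numeral)
  have "(t\<^sup>2 + Y\<^sup>2) powr - e \<le> (Y\<^sup>2) powr - e"
    by (rule powr_mono2') (use Y e in auto)
  also have "\<dots> = \<bar>Y\<bar> powr (- 2 * e)"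
    unfolding Y2 powr_powr by simp
  finally show ?thesis .
qed

lemma powr_neg_le_one_plus:
  fixes b p q :: real
  assumes b: "b > 0" and p: "0 \<le> p" "p \<le> q"
  shows "b powr - p \<le> 1 + b powr - q"
proof (cases "b \<ge> 1")
  case True
  then have "b powr - p \<le> b powr 0" using p by (intro powr_mono) auto
  then have "b powr - p \<le> 1" using b by simp
  moreover have "0 \<le> b powr - q" by simp
  ultimately show ?thesis by linarith
next
  case False
  then have "b powr - p \<le> b powr - q" using p b by (intro powr_mono') auto
  then show ?thesis by simp
qed

lemma eisenstein_summand_Complex:
  "eisenstein_summand e (Complex t Y) = of_real ((t\<^sup>2 + Y\<^sup>2) powr - e) * inverse ((Complex t Y)\<^sup>2)"
proof -
  have "cmod (Complex t Y) powr (2 * e) = (t\<^sup>2 + Y\<^sup>2) powr e"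
    by (simp add: complex_norm powr_half_sqrt[symmetric] powr_powr)
  then show ?thesis
    by (simp add: eisenstein_summand_def powr_minus divide_inverse mult.commute)
qed

lemma norm_inverse_Complex_power: "norm (inverse (Complex t Y ^ n)) = inverse (sqrt (t\<^sup>2 + Y\<^sup>2) ^ n)"
  by (simp add: norm_inverse norm_power complex_norm)

lemma norm_eisenstein_summand_Complex:
  "norm (eisenstein_summand e (Complex t Y)) = (t\<^sup>2 + Y\<^sup>2) powr - e / (t\<^sup>2 + Y\<^sup>2)"
  by (simp add: eisenstein_summand_Complex norm_mult norm_inverse_Complex_power divide_inverse)

lemma norm_eisenstein_summand_Complex_le:
  fixes t Y e :: real
  assumes Y: "Y \<noteq> 0" and e: "e \<ge> 0"
  shows "norm (eisenstein_summand e (Complex t Y)) \<le> \<bar>Y\<bar> powr (- 2 * e) / (t\<^sup>2 + Y\<^sup>2)"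
  unfolding norm_eisenstein_summand_Complex
  using sum_squares_powr_le[OF Y e, of t] sum_squares_pos[OF Y, of t] by (simp add: divide_right_mono)

lemma has_vector_derivative_inverse_Complex_power:
  assumes Y: "Y \<noteq> 0"
  shows "((\<lambda>t. inverse (Complex t Y ^ n)) has_vector_derivative
           - of_nat n * inverse (Complex t Y ^ Suc n)) (at t)"
proof -
  have "((\<lambda>x. inverse ((x + c) ^ n)) has_field_derivative - of_nat n * inverse ((z + c) ^ Suc n)) (at z)"
    if "z + c \<noteq> 0" for z c :: complex
    using that by (cases n) (auto intro!: derivative_eq_intros
        simp: field_simps power_add[symmetric] simp del: power_Suc)
  from this[of "of_real t" "\<i> * of_real Y"]
  have "((\<lambda>x. inverse ((x + \<i> * of_real Y) ^ n)) has_field_derivative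
      - of_nat n * inverse ((of_real t + \<i> * of_real Y) ^ Suc n)) (at (of_real t))"
    using Complex_nonzero[OF Y, of t] by (simp add: Complex_eq)
  then show ?thesis
    unfolding Complex_eq by (rule has_vector_derivative_real_field)
qed

lemma has_real_derivative_sum_squares_powr:
  assumes Y: "Y \<noteq> 0"
  shows "((\<lambda>t. (t\<^sup>2 + Y\<^sup>2) powr p) has_real_derivative 2 * p * t * (t\<^sup>2 + Y\<^sup>2) powr (p - 1)) (at t)"
  using sum_squares_pos[OF Y, of t] by (auto intro!: derivative_eq_intros)

definition eisenstein_summand_deriv :: "real \<Rightarrow> real \<Rightarrow> real \<Rightarrow> complex" where
  "eisenstein_summand_deriv e Y t =
     - 2 * of_real ((t\<^sup>2 + Y\<^sup>2) powr - e) * inverse (Complex t Y ^ 3)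
     - of_real (2 * e * t * (t\<^sup>2 + Y\<^sup>2) powr (- e - 1)) * inverse (Complex t Y ^ 2)"

lemma has_vector_derivative_eisenstein_summand:
  assumes Y: "Y \<noteq> 0"
  shows "((\<lambda>t. eisenstein_summand e (Complex t Y)) has_vector_derivative eisenstein_summand_deriv e Y t) (at t)"
proof -
  have "((\<lambda>t. of_real ((t\<^sup>2 + Y\<^sup>2) powr - e) * inverse (Complex t Y ^ 2)) has_vector_derivative
      of_real ((t\<^sup>2 + Y\<^sup>2) powr - e) * (- of_nat 2 * inverse (Complex t Y ^ Suc 2))
      + of_real (2 * - e * t * (t\<^sup>2 + Y\<^sup>2) powr (- e - 1)) * inverse (Complex t Y ^ 2)) (at t)"
    by (intro has_vector_derivative_mult has_vector_derivative_of_real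
        has_real_derivative_sum_squares_powr has_vector_derivative_inverse_Complex_power Y)
  then show ?thesis
    by (simp add: eisenstein_summand_Complex eisenstein_summand_deriv_def mult_ac)
qed

lemma continuous_on_eisenstein_summand:
  assumes Y: "Y \<noteq> 0"
  shows "continuous_on UNIV (\<lambda>t. eisenstein_summand e (Complex t Y))"
  by (rule continuous_on_vector_derivative)
    (auto intro: has_vector_derivative_at_within has_vector_derivative_eisenstein_summand[OF Y])

lemma continuous_on_eisenstein_summand_deriv:
  assumes Y: "Y \<noteq> 0"
  shows "continuous_on UNIV (eisenstein_summand_deriv e Y)"
  unfolding eisenstein_summand_deriv_def using sum_squares_pos[OF Y] Complex_nonzero[OF Y]
  by (intro continuous_intros) auto

lemma norm_eisenstein_summand_deriv_le_sum:
  fixes t Y e :: real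
  assumes Y: "Y \<noteq> 0" and e: "e \<ge> 0"
  defines "N \<equiv> t\<^sup>2 + Y\<^sup>2"
  shows "norm (eisenstein_summand_deriv e Y t)
           \<le> 2 * N powr - e / (N * sqrt N) + 2 * e * \<bar>t\<bar> * N powr - e / N\<^sup>2"
proof -
  have N: "N > 0" using sum_squares_pos[OF Y] by (simp add: N_def)
  have norm1: "norm (2 * of_real (N powr - e) * inverse (Complex t Y ^ 3)) = 2 * N powr - e / (N * sqrt N)"
  proof -
    have "sqrt N ^ 3 = N * sqrt N"
      using N by (simp add: power3_eq_cube)
    then show ?thesis
      by (simp add: norm_mult norm_inverse_Complex_power N_def[symmetric] divide_inverse)
  qed
  have norm2: "norm (of_real (2 * e * t * N powr (- e - 1)) * inverse (Complex t Y ^ 2))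
      = 2 * e * \<bar>t\<bar> * N powr - e / N\<^sup>2"
  proof -
    have "N powr (- e - 1) = N powr - e / N" using N by (simp add: powr_diff)
    moreover have "sqrt N ^ 2 = N" using N by simp
    ultimately show ?thesis
      unfolding norm_mult norm_of_real norm_inverse_Complex_power N_def[symmetric]
      using N e by (simp add: abs_mult power2_eq_square field_simps)
  qed
  show ?thesis
    using norm_triangle_ineq4[of "- (2 * of_real (N powr - e) * inverse (Complex t Y ^ 3))"
        "of_real (2 * e * t * N powr (- e - 1)) * inverse (Complex t Y ^ 2)"]
    unfolding norm_minus_cancel norm1 norm2 by (simp add: eisenstein_summand_deriv_def N_def)
qed

lemma norm_eisenstein_summand_deriv_le:
  fixes t Y e :: real
  assumes Y: "Y \<noteq> 0" and e: "0 \<le> e" "e \<le> 1"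
  shows "norm (eisenstein_summand_deriv e Y t) \<le> 4 * \<bar>Y\<bar> powr (- 1 - 2 * e) / (t\<^sup>2 + Y\<^sup>2)"
proof -
  define N where "N = t\<^sup>2 + Y\<^sup>2"
  define E where "E = N powr - e"
  have N: "N > 0" using sum_squares_pos[OF Y] by (simp add: N_def)
  have E: "0 \<le> E" "E \<le> \<bar>Y\<bar> powr (- 2 * e)"
    using sum_squares_powr_le[OF Y e(1)] by (auto simp: E_def N_def)
  have sqrtN: "\<bar>Y\<bar> \<le> sqrt N"
    using real_sqrt_le_mono[of "Y\<^sup>2" N] by (simp add: N_def)
  have "2 * \<bar>t\<bar> * \<bar>Y\<bar> \<le> N"
    using sum_squares_bound[of "\<bar>t\<bar>" "\<bar>Y\<bar>"] by (simp add: N_def)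
  moreover have "\<bar>t\<bar> * \<bar>Y\<bar> \<ge> 0" by simp
  ultimately have tY: "\<bar>t\<bar> * \<bar>Y\<bar> \<le> N" by linarith
  have "norm (eisenstein_summand_deriv e Y t) \<le> 2 * E / (N * sqrt N) + 2 * e * \<bar>t\<bar> * E / N\<^sup>2"
    using norm_eisenstein_summand_deriv_le_sum[OF Y e(1), of t] by (simp add: N_def E_def)
  also have "\<dots> \<le> 2 * E / (N * \<bar>Y\<bar>) + 2 * e * E / (N * \<bar>Y\<bar>)"
  proof (rule add_mono)
    show "2 * E / (N * sqrt N) \<le> 2 * E / (N * \<bar>Y\<bar>)"
      using N E(1) sqrtN Y by (intro divide_left_mono mult_left_mono) auto
    have "2 * e * \<bar>t\<bar> * E / N\<^sup>2 = 2 * e * E / (N * \<bar>Y\<bar>) * (\<bar>t\<bar> * \<bar>Y\<bar> / N)"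
      using N Y by (simp add: field_simps power2_eq_square)
    also have "\<dots> \<le> 2 * e * E / (N * \<bar>Y\<bar>)"
      using N tY e E(1) by (intro mult_left_le) auto
    finally show "2 * e * \<bar>t\<bar> * E / N\<^sup>2 \<le> 2 * e * E / (N * \<bar>Y\<bar>)" .
  qed
  also have "\<dots> = (2 + 2 * e) * E / (N * \<bar>Y\<bar>)"
    by (simp add: add_divide_distrib distrib_right)
  also have "\<dots> \<le> 4 * \<bar>Y\<bar> powr (- 2 * e) / (N * \<bar>Y\<bar>)"
    using N Y e E by (intro divide_right_mono mult_mono) auto
  also have "\<dots> = 4 * \<bar>Y\<bar> powr (- 1 - 2 * e) / N"
    using Y by (simp add: powr_diff powr_minus field_simps)
  finally show ?thesis by (simp add: N_def)
qed


section \<open>The integral of the summand\<close>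

definition eisenstein_correction :: "real \<Rightarrow> real \<Rightarrow> real \<Rightarrow> complex" where
  "eisenstein_correction e Y t = of_real (t * (t\<^sup>2 + Y\<^sup>2) powr (- e - 1)) * inverse (Complex t Y)"

lemma continuous_on_eisenstein_correction:
  assumes Y: "Y \<noteq> 0"
  shows "continuous_on UNIV (eisenstein_correction e Y)"
  unfolding eisenstein_correction_def using sum_squares_pos[OF Y] Complex_nonzero[OF Y]
  by (intro continuous_intros) auto

lemma norm_eisenstein_correction_le:
  fixes t Y e :: real
  assumes Y: "Y \<noteq> 0" and e: "e \<ge> 0"
  shows "norm (eisenstein_correction e Y t) \<le> \<bar>Y\<bar> powr (- 2 * e) / (t\<^sup>2 + Y\<^sup>2)"
proof -
  define N where "N = t\<^sup>2 + Y\<^sup>2"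
  have N: "N > 0" using sum_squares_pos[OF Y] by (simp add: N_def)
  have t: "\<bar>t\<bar> \<le> sqrt N"
    using real_sqrt_le_mono[of "t\<^sup>2" N] by (simp add: N_def)
  have inv: "norm (inverse (Complex t Y)) = inverse (sqrt N)"
    by (simp add: norm_inverse complex_norm N_def)
  have pow: "N powr (- e - 1) = N powr - e / N"
    using N by (simp add: powr_diff)
  have "norm (eisenstein_correction e Y t) = (\<bar>t\<bar> / sqrt N) * (N powr - e / N)"
    unfolding eisenstein_correction_def norm_mult norm_of_real inv N_def[symmetric] pow
    using N by (simp add: abs_mult divide_inverse)
  also have "\<dots> \<le> 1 * (\<bar>Y\<bar> powr (- 2 * e) / N)"
    using t N sum_squares_powr_le[OF Y e, of t]
    by (intro mult_mono divide_right_mono) (auto simp: N_def)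
  finally show ?thesis by (simp add: N_def)
qed

lemma tendsto_eisenstein_antiderivative_at_infinity:
  assumes Y: "Y \<noteq> 0" and e: "e \<ge> 0"
  shows "((\<lambda>t. of_real ((t\<^sup>2 + Y\<^sup>2) powr - e) * inverse (Complex t Y)) \<longlongrightarrow> 0) at_infinity"
proof (rule Lim_null_comparison)
  show "\<forall>\<^sub>F t in at_infinity. norm (of_real ((t\<^sup>2 + Y\<^sup>2) powr - e) * inverse (Complex t Y))
      \<le> \<bar>Y\<bar> powr (- 2 * e) / norm t"
  proof (rule eventually_at_infinity[THEN iffD2], intro exI allI impI)
    fix t :: real assume t: "norm t \<ge> 1"
    have "\<bar>t\<bar> \<le> sqrt (t\<^sup>2 + Y\<^sup>2)"
      using real_sqrt_le_mono[of "t\<^sup>2" "t\<^sup>2 + Y\<^sup>2"] by simp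
    moreover have "norm (of_real ((t\<^sup>2 + Y\<^sup>2) powr - e) * inverse (Complex t Y))
        = (t\<^sup>2 + Y\<^sup>2) powr - e / sqrt (t\<^sup>2 + Y\<^sup>2)"
      by (simp add: norm_mult norm_inverse complex_norm divide_inverse)
    ultimately show "norm (of_real ((t\<^sup>2 + Y\<^sup>2) powr - e) * inverse (Complex t Y))
        \<le> \<bar>Y\<bar> powr (- 2 * e) / norm t"
      using t sum_squares_powr_le[OF Y e, of t] by (simp add: frac_le)
  qed
  show "((\<lambda>t. \<bar>Y\<bar> powr (- 2 * e) / norm t) \<longlongrightarrow> 0) at_infinity"
    by (intro tendsto_divide_0[OF tendsto_const] filterlim_at_top_imp_at_infinity filterlim_norm_at_top)
qed

(* Integration by parts: with w = t + iY, the derivative of -|w|^(-2e) / w is the summand plus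
   2e times the correction, and -|w|^(-2e) / w vanishes at infinity. *)
lemma integral_eisenstein_summand:
  assumes Y: "Y \<noteq> 0" and e: "e \<ge> 0"
  shows "(LBINT t. eisenstein_summand e (Complex t Y)) = - 2 * of_real e * (LBINT t. eisenstein_correction e Y t)"
proof -
  define H where "H t = - (of_real ((t\<^sup>2 + Y\<^sup>2) powr - e) * inverse (Complex t Y))" for t
  define h where "h t = eisenstein_summand e (Complex t Y) + 2 * of_real e * eisenstein_correction e Y t" for t
  have int_summand: "integrable lborel (\<lambda>t. eisenstein_summand e (Complex t Y))"
    by (rule integrable_bounded_by_inverse_square(1)[OF Y continuous_on_eisenstein_summand[OF Y]
          norm_eisenstein_summand_Complex_le[OF Y e]])
  have int_corr: "integrable lborel (eisenstein_correction e Y)"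
    by (rule integrable_bounded_by_inverse_square(1)[OF Y continuous_on_eisenstein_correction[OF Y]
          norm_eisenstein_correction_le[OF Y e]])
  have "(H has_vector_derivative h t) (at t)" for t
  proof -
    have inv: "((\<lambda>t. inverse (Complex t Y)) has_vector_derivative - inverse (Complex t Y ^ 2)) (at t)"
      using has_vector_derivative_inverse_Complex_power[OF Y, of 1 t] by (simp add: power2_eq_square)
    have "(H has_vector_derivative
        - (of_real ((t\<^sup>2 + Y\<^sup>2) powr - e) * - inverse (Complex t Y ^ 2)
          + of_real (2 * - e * t * (t\<^sup>2 + Y\<^sup>2) powr (- e - 1)) * inverse (Complex t Y))) (at t)"
      unfolding H_def
      by (intro has_vector_derivative_minus has_vector_derivative_mult has_vector_derivative_of_real
          has_real_derivative_sum_squares_powr inv Y)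
    then show ?thesis
      by (simp add: h_def eisenstein_summand_Complex eisenstein_correction_def algebra_simps)
  qed
  then have "(LBINT t. h t) = 0"
  proof (rule integral_eq_0_if_antiderivative_vanishes)
    show "continuous_on UNIV h"
      unfolding h_def by (intro continuous_intros continuous_on_eisenstein_summand
          continuous_on_eisenstein_correction Y)
    show "integrable lborel h"
      unfolding h_def by (intro Bochner_Integration.integrable_add integrable_mult_right int_summand int_corr)
    have "(H \<longlongrightarrow> 0) at_infinity"
      unfolding H_def using tendsto_minus[OF tendsto_eisenstein_antiderivative_at_infinity[OF Y e]]
      by simp
    then show "(H \<longlongrightarrow> 0) at_top" "(H \<longlongrightarrow> 0) at_bot"
      by (auto intro: tendsto_mono at_top_le_at_infinity at_bot_le_at_infinity)
  qed
  then show ?thesis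
    unfolding h_def using int_summand int_corr by (simp add: eq_neg_iff_add_eq_0)
qed

lemma eisenstein_correction_scale:
  assumes Y: "Y \<noteq> 0"
  shows "eisenstein_correction e Y (Y * s) = of_real (\<bar>Y\<bar> powr (- 2 - 2 * e)) * eisenstein_correction e 1 s"
proof -
  have "(Y * s)\<^sup>2 + Y\<^sup>2 = Y\<^sup>2 * (s\<^sup>2 + 1\<^sup>2)"
    by (simp add: power_mult_distrib algebra_simps)
  moreover have "(Y\<^sup>2 * (s\<^sup>2 + 1\<^sup>2)) powr (- e - 1) = (Y\<^sup>2) powr (- e - 1) * (s\<^sup>2 + 1\<^sup>2) powr (- e - 1)"
    by (rule powr_mult)
  moreover have "(Y\<^sup>2) powr (- e - 1) = \<bar>Y\<bar> powr (- 2 - 2 * e)"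
  proof -
    have Y2: "Y\<^sup>2 = \<bar>Y\<bar> powr 2" using Y by (simp add: powr_numeral)
    show ?thesis unfolding Y2 powr_powr by (rule arg_cong[where f="\<lambda>x. \<bar>Y\<bar> powr x"]) simp
  qed
  moreover have "Complex (Y * s) Y = of_real Y * Complex s 1"
    by (simp add: complex_eq_iff)
  ultimately show ?thesis
    unfolding eisenstein_correction_def using Y
    by (simp only:) (simp add: inverse_mult_distrib)
qed

definition eisenstein_correction_integral :: "real \<Rightarrow> complex" where
  "eisenstein_correction_integral e = (LBINT s. eisenstein_correction e 1 s)"

lemma integral_eisenstein_correction:
  assumes Y: "Y \<noteq> 0"
  shows "(LBINT t. eisenstein_correction e Y t) = of_real (\<bar>Y\<bar> powr (- 1 - 2 * e)) * eisenstein_correction_integral e"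
proof -
  have "(LBINT t. eisenstein_correction e Y t) = \<bar>Y\<bar> *\<^sub>R (LBINT s. eisenstein_correction e Y (0 + Y * s))"
    by (rule lborel_integral_real_affine[OF Y])
  also have "\<dots> = of_real (\<bar>Y\<bar> * \<bar>Y\<bar> powr (- 2 - 2 * e)) * eisenstein_correction_integral e"
    by (simp add: eisenstein_correction_scale[OF Y] eisenstein_correction_integral_def scaleR_conv_of_real)
  also have "\<bar>Y\<bar> * \<bar>Y\<bar> powr (- 2 - 2 * e) = \<bar>Y\<bar> powr (- 1 - 2 * e)"
    using Y by (simp add: powr_add[symmetric] powr_mult_base)
  finally show ?thesis .
qed

lemma tendsto_eisenstein_correction_integral: "(eisenstein_correction_integral \<longlongrightarrow> eisenstein_correction_integral 0) (at_right 0)"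
proof -
  have "((\<lambda>x. eisenstein_correction_integral (inverse x)) \<longlongrightarrow> eisenstein_correction_integral 0) at_top"
    unfolding eisenstein_correction_integral_def
  proof (rule integral_dominated_convergence_at_top[where w="\<lambda>s. 1 / (s\<^sup>2 + 1\<^sup>2)"])
    show "integrable lborel (\<lambda>s::real. 1 / (s\<^sup>2 + 1\<^sup>2))"
      by (rule integral_inverse_square_plus_square(1)) simp
    show "AE s in lborel. ((\<lambda>x. eisenstein_correction (inverse x) 1 s) \<longlongrightarrow> eisenstein_correction 0 1 s) at_top"
    proof (rule AE_I2)
      fix s :: real
      have "((\<lambda>e. eisenstein_correction e 1 s) \<longlongrightarrow> eisenstein_correction 0 1 s) (at_right 0)"
        unfolding eisenstein_correction_def using sum_squares_pos[of 1 s]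
        by (intro tendsto_intros tendsto_mono[OF at_within_le_at]) auto
      then show "((\<lambda>x. eisenstein_correction (inverse x) 1 s) \<longlongrightarrow> eisenstein_correction 0 1 s) at_top"
        by (rule filterlim_at_right_to_top[THEN iffD1])
    qed
    show "\<forall>\<^sub>F x in at_top. AE s in lborel. norm (eisenstein_correction (inverse x) 1 s) \<le> 1 / (s\<^sup>2 + 1\<^sup>2)"
      using eventually_gt_at_top[of 0]
      by eventually_elim (intro AE_I2, use norm_eisenstein_correction_le[of 1 "inverse _"] in simp)
  qed (simp_all add: borel_measurable_continuous_onI continuous_on_eisenstein_correction)
  then show ?thesis by (rule filterlim_at_right_to_top[THEN iffD2])
qed


section \<open>Row sums\<close>

lemma eisenstein_lattice_sum_estimate:
  fixes D :: int and Y c e :: real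
  assumes D: "D \<noteq> 0" and Y: "Y \<noteq> 0" and e: "0 \<le> e" "e \<le> 1"
  defines "\<phi> \<equiv> \<lambda>n::int. eisenstein_summand e (Complex (c + D * n) Y)"
    and "M \<equiv> - 2 * of_real (e / \<bar>D\<bar> * \<bar>Y\<bar> powr (- 1 - 2 * e)) * eisenstein_correction_integral e"
  shows "(\<lambda>n. norm (\<phi> n)) summable_on UNIV"
    and "norm ((\<Sum>\<^sub>\<infinity>n. \<phi> n) - M) \<le> 4 * pi * \<bar>Y\<bar> powr (- 2 - 2 * e)"
    and "(\<Sum>\<^sub>\<infinity>n. norm (\<phi> n)) \<le> pi / \<bar>D\<bar> * \<bar>Y\<bar> powr (- 1 - 2 * e) + 4 * pi * \<bar>Y\<bar> powr (- 2 - 2 * e)"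
proof -
  define d where "d = real_of_int \<bar>D\<bar>"
  have d: "d > 0" using D by (simp add: d_def)
  note est = lattice_sum_integral_estimate[where c = c, OF has_vector_derivative_eisenstein_summand[OF Y, of e]
      continuous_on_eisenstein_summand_deriv[OF Y, of e] d]
  note summand_integrable = integrable_bounded_by_inverse_square[OF Y
      continuous_on_eisenstein_summand[OF Y] norm_eisenstein_summand_Complex_le[OF Y e(1)]]
  note deriv_integrable = integrable_bounded_by_inverse_square[OF Y
      continuous_on_eisenstein_summand_deriv[OF Y] norm_eisenstein_summand_deriv_le[OF Y e]]
  have pow: "C * \<bar>Y\<bar> powr a * pi / \<bar>Y\<bar> = C * pi * \<bar>Y\<bar> powr b" if "b = a - 1" for C a b
    using Y that by (simp add: powr_diff)
  have int_deriv: "(LBINT t. norm (eisenstein_summand_deriv e Y t)) \<le> 4 * pi * \<bar>Y\<bar> powr (- 2 - 2 * e)"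
    using deriv_integrable(2) pow[of "- 2 - 2 * e" "- 1 - 2 * e" 4] by simp
  have int_summand: "(LBINT t. norm (eisenstein_summand e (Complex t Y))) \<le> pi * \<bar>Y\<bar> powr (- 1 - 2 * e)"
    using summand_integrable(2) pow[of "- 1 - 2 * e" "- 2 * e" 1] by simp
  have "(1 / d) *\<^sub>R (LBINT t. eisenstein_summand e (Complex t Y)) = M"
    unfolding integral_eisenstein_summand[OF Y e(1)] integral_eisenstein_correction[OF Y] M_def d_def
    by (simp add: scaleR_conv_of_real)
  then have main: "norm ((\<Sum>\<^sub>\<infinity>n::int. eisenstein_summand e (Complex (c + d * n) Y)) - M)
      \<le> 4 * pi * \<bar>Y\<bar> powr (- 2 - 2 * e)"
    using est(2)[OF summand_integrable(1) deriv_integrable(1)] int_deriv by simp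
  show "(\<lambda>n. norm (\<phi> n)) summable_on UNIV"
    using est(1)[OF summand_integrable(1) deriv_integrable(1)]
      infsum_int_lattice_abs(1)[of "\<lambda>t. norm (eisenstein_summand e (Complex t Y))"]
    by (simp add: \<phi>_def d_def)
  show "norm ((\<Sum>\<^sub>\<infinity>n. \<phi> n) - M) \<le> 4 * pi * \<bar>Y\<bar> powr (- 2 - 2 * e)"
    using main infsum_int_lattice_abs(2)[of "\<lambda>t. eisenstein_summand e (Complex t Y)"]
    by (simp add: \<phi>_def d_def)
  have "(\<Sum>\<^sub>\<infinity>n::int. norm (eisenstein_summand e (Complex (c + d * n) Y)))
      \<le> (1 / d) * (LBINT t. norm (eisenstein_summand e (Complex t Y)))
        + (LBINT t. norm (eisenstein_summand_deriv e Y t))"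
    by (rule est(3)[OF summand_integrable(1) deriv_integrable(1)])
  also have "\<dots> \<le> (1 / d) * (pi * \<bar>Y\<bar> powr (- 1 - 2 * e)) + 4 * pi * \<bar>Y\<bar> powr (- 2 - 2 * e)"
    using int_deriv int_summand d by (intro add_mono mult_left_mono) auto
  finally show "(\<Sum>\<^sub>\<infinity>n. norm (\<phi> n)) \<le> pi / \<bar>D\<bar> * \<bar>Y\<bar> powr (- 1 - 2 * e) + 4 * pi * \<bar>Y\<bar> powr (- 2 - 2 * e)"
    using infsum_int_lattice_abs(2)[of "\<lambda>t. norm (eisenstein_summand e (Complex t Y))"]
    by (simp add: \<phi>_def d_def)
qed

lemma tendsto_eisenstein_lattice_sum:
  fixes D :: int and Y c :: real
  assumes D: "D \<noteq> 0" and Y: "Y \<noteq> 0"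
  shows "((\<lambda>e. \<Sum>\<^sub>\<infinity>n::int. eisenstein_summand e (Complex (c + D * n) Y))
           \<longlongrightarrow> (\<Sum>\<^sub>\<infinity>n::int. eisenstein_summand 0 (Complex (c + D * n) Y))) (at_right 0)"
proof (rule tendsto_infsum_dominated)
  define K where "K = 1 + \<bar>Y\<bar> powr - 2"
  show "(\<lambda>n. K * norm (eisenstein_summand 0 (Complex (c + D * n) Y))) summable_on UNIV"
    using eisenstein_lattice_sum_estimate(1)[OF D Y, of 0] by (intro summable_on_cmult_right) auto
  show "\<forall>\<^sub>F e in at_right 0. \<forall>n\<in>UNIV. norm (eisenstein_summand e (Complex (c + D * n) Y))
      \<le> K * norm (eisenstein_summand 0 (Complex (c + D * n) Y))"
  proof (rule eventually_at_rightI[of 0 1])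
    fix e :: real assume e: "e \<in> {0<..<1}"
    show "\<forall>n\<in>UNIV. norm (eisenstein_summand e (Complex (c + D * n) Y))
        \<le> K * norm (eisenstein_summand 0 (Complex (c + D * n) Y))"
    proof
      fix n :: int
      define t where "t = c + D * n"
      have "\<bar>Y\<bar> powr (- 2 * e) \<le> K"
        unfolding K_def using powr_neg_le_one_plus[of "\<bar>Y\<bar>" "2 * e" 2] Y e by simp
      then have "norm (eisenstein_summand e (Complex t Y)) \<le> K / (t\<^sup>2 + Y\<^sup>2)"
        using norm_eisenstein_summand_Complex_le[OF Y, of e t] e sum_squares_pos[OF Y, of t]
          divide_right_mono[of "\<bar>Y\<bar> powr (- 2 * e)" K "t\<^sup>2 + Y\<^sup>2"]
        by simp
      then show "norm (eisenstein_summand e (Complex (c + D * n) Y))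
          \<le> K * norm (eisenstein_summand 0 (Complex (c + D * n) Y))"
        by (simp add: t_def norm_eisenstein_summand_Complex divide_inverse)
    qed
  qed simp
  show "((\<lambda>e. eisenstein_summand e (Complex (c + D * n) Y))
      \<longlongrightarrow> eisenstein_summand 0 (Complex (c + D * n) Y)) (at_right 0)" for n
    unfolding eisenstein_summand_Complex using sum_squares_pos[OF Y]
    by (intro tendsto_intros tendsto_mono[OF at_within_le_at]) auto
qed

definition eisenstein_row_sum :: "real \<Rightarrow> complex \<Rightarrow> int \<Rightarrow> int \<Rightarrow> int \<Rightarrow> int \<Rightarrow> complex" where
  "eisenstein_row_sum e z a1 a2 D m =
     (\<Sum>\<^sub>\<infinity>n::int. eisenstein_summand e (z * of_int (a1 + D * m) + of_int (a2 + D * n)))"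

lemma lattice_point_eq_Complex:
  "z * of_int u + of_int (a2 + D * n) = Complex ((Re z * u + a2) + D * n) (Im z * u)"
  by (simp add: complex_eq_iff)

(* (1/|D|) times the integral of the summand along the row, by integral_eisenstein_summand and
   integral_eisenstein_correction. *)
definition eisenstein_row_main_term :: "real \<Rightarrow> complex \<Rightarrow> int \<Rightarrow> int \<Rightarrow> int \<Rightarrow> complex" where
  "eisenstein_row_main_term e z a1 D m =
     - 2 * of_real (e / \<bar>D\<bar> * (Im z * \<bar>real_of_int (a1 + D * m)\<bar>) powr (- 1 - 2 * e)) * eisenstein_correction_integral e"

lemma eisenstein_row_sum_estimate:
  fixes a1 a2 D m :: int and z :: complex
  assumes D: "D \<noteq> 0" and y: "Im z > 0" and m: "a1 + D * m \<noteq> 0" and e: "0 \<le> e" "e \<le> 1"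
  defines "Y \<equiv> Im z * \<bar>real_of_int (a1 + D * m)\<bar>"
  shows "(\<lambda>n. norm (eisenstein_summand e (z * of_int (a1 + D * m) + of_int (a2 + D * n)))) summable_on UNIV"
    and "norm (eisenstein_row_sum e z a1 a2 D m - eisenstein_row_main_term e z a1 D m)
           \<le> 4 * pi * Y powr (- 2 - 2 * e)"
    and "(\<Sum>\<^sub>\<infinity>n. norm (eisenstein_summand e (z * of_int (a1 + D * m) + of_int (a2 + D * n))))
           \<le> pi / \<bar>D\<bar> * Y powr (- 1 - 2 * e) + 4 * pi * Y powr (- 2 - 2 * e)"
proof -
  have Y: "Im z * real_of_int (a1 + D * m) \<noteq> 0" using y m by (simp del: of_int_add of_int_mult)
  have absY: "\<bar>Im z * real_of_int (a1 + D * m)\<bar> = Y"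
    using y by (simp add: Y_def abs_mult)
  note est = eisenstein_lattice_sum_estimate[OF D Y e, of "Re z * (a1 + D * m) + a2",
      unfolded absY, folded lattice_point_eq_Complex]
  show "(\<lambda>n. norm (eisenstein_summand e (z * of_int (a1 + D * m) + of_int (a2 + D * n)))) summable_on UNIV"
    using est(1) by simp
  show "norm (eisenstein_row_sum e z a1 a2 D m - eisenstein_row_main_term e z a1 D m)
           \<le> 4 * pi * Y powr (- 2 - 2 * e)"
    using est(2) by (simp add: eisenstein_row_sum_def eisenstein_row_main_term_def Y_def)
  show "(\<Sum>\<^sub>\<infinity>n. norm (eisenstein_summand e (z * of_int (a1 + D * m) + of_int (a2 + D * n))))
           \<le> pi / \<bar>D\<bar> * Y powr (- 1 - 2 * e) + 4 * pi * Y powr (- 2 - 2 * e)"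
    using est(3) by simp
qed

(* Im(z)^(-2e) <= 1 + Im(z)^(-2) makes the bound uniform in e. *)
lemma eisenstein_row_sum_remainder_le:
  fixes a1 a2 D m :: int and z :: complex
  assumes D: "D \<noteq> 0" and y: "Im z > 0" and m: "a1 + D * m \<noteq> 0" and e: "0 \<le> e" "e \<le> 1"
  shows "norm (eisenstein_row_sum e z a1 a2 D m - eisenstein_row_main_term e z a1 D m)
           \<le> 4 * pi * Im z powr - 2 * (1 + Im z powr - 2) * \<bar>real_of_int (a1 + D * m)\<bar> powr - 2"
proof -
  define u where "u = \<bar>real_of_int (a1 + D * m)\<bar>"
  have u: "u \<ge> 1" using m by (simp add: u_def del: of_int_add of_int_mult)
  have "(Im z * u) powr (- 2 - 2 * e) = Im z powr - 2 * Im z powr - (2 * e) * u powr - (2 + 2 * e)"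
    using y u by (simp add: powr_mult powr_add[symmetric])
  also have "\<dots> \<le> Im z powr - 2 * (1 + Im z powr - 2) * u powr - 2"
    using y u e powr_neg_le_one_plus[of "Im z" "2 * e" 2]
    by (intro mult_mono mult_left_mono powr_mono) auto
  finally have "(Im z * u) powr (- 2 - 2 * e) \<le> Im z powr - 2 * (1 + Im z powr - 2) * u powr - 2" .
  from order_trans[OF eisenstein_row_sum_estimate(2)[OF D y m e, of a2, folded u_def]
      mult_left_mono[OF this, of "4 * pi"]]
  show ?thesis by (simp add: u_def mult.assoc)
qed

lemma tendsto_eisenstein_row_sum:
  fixes a1 a2 D m :: int and z :: complex
  assumes D: "D \<noteq> 0" and y: "Im z > 0" and m: "a1 + D * m \<noteq> 0"
  shows "((\<lambda>e. eisenstein_row_sum e z a1 a2 D m) \<longlongrightarrow> eisenstein_row_sum 0 z a1 a2 D m) (at_right 0)"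
proof -
  have "Im z * real_of_int (a1 + D * m) \<noteq> 0"
    using y m by (simp del: of_int_add of_int_mult)
  then show ?thesis
    unfolding eisenstein_row_sum_def lattice_point_eq_Complex by (rule tendsto_eisenstein_lattice_sum[OF D])
qed

lemma has_sum_eisenstein_row_main_terms:
  fixes a1 D :: int and z :: complex
  assumes D: "D \<noteq> 0" and y: "Im z > 0" and e: "e > 0"
  defines "M \<equiv> {m. a1 + D * m \<noteq> 0}"
  shows "(eisenstein_row_main_term e z a1 D has_sum
           - 2 * of_real (Im z powr (- 1 - 2 * e) / \<bar>D\<bar>
             * (e * (\<Sum>\<^sub>\<infinity>m\<in>M. \<bar>real_of_int (a1 + D * m)\<bar> powr - (1 + 2 * e))))
           * eisenstein_correction_integral e) M"
proof -
  define Z where "Z = (\<Sum>\<^sub>\<infinity>m\<in>M. \<bar>real_of_int (a1 + D * m)\<bar> powr - (1 + 2 * e))"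
  have "((\<lambda>m. \<bar>real_of_int (a1 + D * m)\<bar> powr - (1 + 2 * e)) has_sum Z) M"
    unfolding Z_def M_def using nonzero_int_arith_prog_zeta(1)[OF D, of "1 + 2 * e"] e
    by (intro has_sum_infsum) auto
  then have "((\<lambda>m. - 2 * of_real (Im z powr (- 1 - 2 * e) / \<bar>D\<bar> * e
      * \<bar>real_of_int (a1 + D * m)\<bar> powr - (1 + 2 * e)) * eisenstein_correction_integral e)
      has_sum - 2 * of_real (Im z powr (- 1 - 2 * e) / \<bar>D\<bar> * e * Z) * eisenstein_correction_integral e) M"
    by (intro has_sum_cmult_left has_sum_cmult_right has_sum_of_real)
  then show ?thesis
    using y by (simp add: eisenstein_row_main_term_def[abs_def] Z_def powr_mult mult_ac)
qed

lemma tendsto_infsum_eisenstein_row_main_terms: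
  fixes a1 D :: int and z :: complex
  assumes D: "D \<noteq> 0" and y: "Im z > 0"
  defines "M \<equiv> {m. a1 + D * m \<noteq> 0}"
  shows "((\<lambda>e. \<Sum>\<^sub>\<infinity>m\<in>M. eisenstein_row_main_term e z a1 D m)
           \<longlongrightarrow> - 2 * of_real (1 / (real_of_int D ^ 2 * Im z)) * eisenstein_correction_integral 0) (at_right 0)"
proof -
  define Z where "Z s = (\<Sum>\<^sub>\<infinity>m\<in>M. \<bar>real_of_int (a1 + D * m)\<bar> powr - s)" for s
  define V where "V e = - 2 * of_real (Im z powr (- 1 - 2 * e) / \<bar>D\<bar> * (e * Z (1 + 2 * e)))
      * eisenstein_correction_integral e" for e
  have "\<forall>\<^sub>F e in at_right 0. V e = (\<Sum>\<^sub>\<infinity>m\<in>M. eisenstein_row_main_term e z a1 D m)"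
    using eventually_at_right_less[of 0]
    by eventually_elim (simp add: infsumI[OF has_sum_eisenstein_row_main_terms[OF D y]] V_def Z_def M_def)
  moreover have "(V \<longlongrightarrow> - 2 * of_real (Im z powr (- 1 - 2 * 0) / \<bar>D\<bar> * (1 / \<bar>D\<bar>)) * eisenstein_correction_integral 0)
      (at_right 0)"
    unfolding V_def using nonzero_int_arith_prog_zeta(2)[OF D, of a1] y D
    by (intro tendsto_intros tendsto_eisenstein_correction_integral) (auto simp: Z_def M_def)
  moreover have "Im z powr (- 1 - 2 * 0) / \<bar>D\<bar> * (1 / \<bar>D\<bar>) = 1 / (real_of_int D ^ 2 * Im z)"
    using y by (simp add: powr_minus divide_inverse power2_eq_square abs_mult_self_eq
        flip: abs_inverse)
  ultimately show ?thesis
    by (simp only: Lim_transform_eventually)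
qed


lemma sigma_eps_eq_infsum_row_sums:
  fixes a1 a2 D :: int and z :: complex
  assumes D: "D \<noteq> 0" and y: "Im z > 0" and e: "0 < e" "e \<le> 1"
  shows "sigma_eps e z a1 a2 D = (\<Sum>\<^sub>\<infinity>m\<in>{m. a1 + D * m \<noteq> 0}. eisenstein_row_sum e z a1 a2 D m)"
proof -
  define M where "M = {m. a1 + D * m \<noteq> 0}"
  define f where "f = (\<lambda>(m, n). eisenstein_summand e (z * of_int (a1 + D * m) + of_int (a2 + D * n)))"
  define B where "B m = pi / \<bar>D\<bar> * (Im z * \<bar>real_of_int (a1 + D * m)\<bar>) powr (- 1 - 2 * e)
      + 4 * pi * (Im z * \<bar>real_of_int (a1 + D * m)\<bar>) powr (- 2 - 2 * e)" for m
  note est = eisenstein_row_sum_estimate[OF D y _ less_imp_le[OF e(1)] e(2)]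
  have "B = (\<lambda>m. (pi / \<bar>D\<bar> * Im z powr (- 1 - 2 * e)) * \<bar>real_of_int (a1 + D * m)\<bar> powr - (1 + 2 * e)
      + (4 * pi * Im z powr (- 2 - 2 * e)) * \<bar>real_of_int (a1 + D * m)\<bar> powr - (2 + 2 * e))"
    unfolding B_def using y by (intro ext) (simp add: powr_mult del: of_int_add of_int_mult)
  then have B: "B summable_on M"
    unfolding M_def using e
    by (simp only:) (intro summable_on_add summable_on_cmult_right nonzero_int_arith_prog_zeta(1)[OF D], auto)
  have "(\<lambda>x. norm (f x)) summable_on Sigma M (\<lambda>_. UNIV)"
    unfolding Infinite_Sum.abs_summable_on_Sigma_iff
  proof
    show "\<forall>m\<in>M. (\<lambda>n. norm (f (m, n))) summable_on UNIV"
      using est(1) by (simp add: M_def f_def)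
    show "(\<lambda>m. norm (\<Sum>\<^sub>\<infinity>n\<in>UNIV. norm (f (m, n)))) summable_on M"
    proof (rule summable_on_comparison_test[OF B])
      fix m assume "m \<in> M"
      then have "(\<Sum>\<^sub>\<infinity>n. norm (f (m, n))) \<le> B m"
        unfolding f_def B_def case_prod_conv M_def mem_Collect_eq by (rule est(3))
      then show "norm (\<Sum>\<^sub>\<infinity>n\<in>UNIV. norm (f (m, n))) \<le> B m"
        by (simp add: infsum_nonneg)
    qed simp
  qed
  then have summ: "f summable_on Sigma M (\<lambda>_. UNIV)"
    by (rule abs_summable_summable)
  have "infsum f (Sigma M (\<lambda>_. UNIV)) = (\<Sum>\<^sub>\<infinity>m\<in>M. eisenstein_row_sum e z a1 a2 D m)"
    unfolding eisenstein_row_sum_def infsum_Sigma_banach[OF summ, symmetric] by (simp add: f_def)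
  moreover have "{(m, n). a1 + D * m \<noteq> 0} = Sigma M (\<lambda>_. UNIV)"
    by (auto simp: M_def)
  then have "sigma_eps e z a1 a2 D = infsum f (Sigma M (\<lambda>_. UNIV))"
    unfolding sigma_eps_def Let_def f_def eisenstein_summand_def by (rule arg_cong)
  ultimately show ?thesis
    by (simp add: M_def)
qed

lemma tendsto_sigma_eps:
  fixes a1 a2 D :: int and z :: complex
  assumes D: "D \<noteq> 0" and y: "Im z > 0"
  defines "M \<equiv> {m. a1 + D * m \<noteq> 0}"
  shows "((\<lambda>e. sigma_eps e z a1 a2 D) \<longlongrightarrow>
           (\<Sum>\<^sub>\<infinity>m\<in>M. eisenstein_row_sum 0 z a1 a2 D m)
             - 2 * of_real (1 / (real_of_int D ^ 2 * Im z)) * eisenstein_correction_integral 0) (at_right 0)"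
proof -
  define T where "T e m = eisenstein_row_main_term e z a1 D m" for e m
  define G where "G e m = eisenstein_row_sum e z a1 a2 D m - T e m" for e m
  define W where "W m = 4 * pi * Im z powr - 2 * (1 + Im z powr - 2) * \<bar>real_of_int (a1 + D * m)\<bar> powr - 2" for m
  have W: "W summable_on M"
    unfolding W_def M_def by (intro summable_on_cmult_right nonzero_int_arith_prog_zeta(1)[OF D]) simp
  have G_le: "norm (G e m) \<le> W m" if "m \<in> M" "0 \<le> e" "e \<le> 1" for e m
    using eisenstein_row_sum_remainder_le[OF D y _ that(2,3), of a1 m a2] that(1)
    by (simp add: G_def T_def W_def M_def)
  have "\<forall>\<^sub>F e in at_right 0. (\<Sum>\<^sub>\<infinity>m\<in>M. G e m) + (\<Sum>\<^sub>\<infinity>m\<in>M. T e m) = sigma_eps e z a1 a2 D"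
  proof (rule eventually_at_rightI[of 0 1])
    fix e :: real assume e: "e \<in> {0<..<1}"
    have "(\<lambda>m. norm (G e m)) summable_on M"
      using G_le e by (intro Infinite_Sum.abs_summable_on_comparison_test'[OF W]) auto
    then have "G e summable_on M"
      by (rule abs_summable_summable)
    moreover have "T e summable_on M"
      using has_sum_eisenstein_row_main_terms[OF D y, of e a1] e unfolding T_def M_def
      by (auto dest: has_sum_imp_summable)
    ultimately have "(\<Sum>\<^sub>\<infinity>m\<in>M. G e m) + (\<Sum>\<^sub>\<infinity>m\<in>M. T e m) = (\<Sum>\<^sub>\<infinity>m\<in>M. G e m + T e m)"
      by (intro infsum_add[symmetric])
    then show "(\<Sum>\<^sub>\<infinity>m\<in>M. G e m) + (\<Sum>\<^sub>\<infinity>m\<in>M. T e m) = sigma_eps e z a1 a2 D"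
      using sigma_eps_eq_infsum_row_sums[OF D y, of e a1 a2] e by (simp add: G_def M_def)
  qed simp
  moreover have "((\<lambda>e. \<Sum>\<^sub>\<infinity>m\<in>M. G e m) \<longlongrightarrow> (\<Sum>\<^sub>\<infinity>m\<in>M. G 0 m)) (at_right 0)"
  proof (rule tendsto_infsum_dominated[OF W])
    show "\<forall>\<^sub>F e in at_right 0. \<forall>m\<in>M. norm (G e m) \<le> W m"
      by (rule eventually_at_rightI[of 0 1]) (auto intro: G_le)
    show "((\<lambda>e. G e m) \<longlongrightarrow> G 0 m) (at_right 0)" if "m \<in> M" for m
      using that y D unfolding G_def T_def eisenstein_row_main_term_def M_def
      by (auto intro!: tendsto_eq_intros tendsto_eisenstein_row_sum tendsto_eisenstein_correction_integral
          simp del: of_int_add of_int_mult)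
  qed
  moreover have "(\<Sum>\<^sub>\<infinity>m\<in>M. G 0 m) = (\<Sum>\<^sub>\<infinity>m\<in>M. eisenstein_row_sum 0 z a1 a2 D m)"
    by (simp add: G_def T_def eisenstein_row_main_term_def)
  ultimately show ?thesis
    using tendsto_add[OF _ tendsto_infsum_eisenstein_row_main_terms[OF D y, of a1, folded M_def T_def]]
      Lim_transform_eventually by fastforce
qed

lemma norm_sigma_eps_limit_le:
  fixes a1 a2 D :: int and z :: complex
  assumes D: "D \<noteq> 0" and y: "Im z > 0"
  defines "M \<equiv> {m. a1 + D * m \<noteq> 0}"
  shows "norm ((\<Sum>\<^sub>\<infinity>m\<in>M. eisenstein_row_sum 0 z a1 a2 D m)
               - 2 * of_real (1 / (real_of_int D ^ 2 * Im z)) * eisenstein_correction_integral 0)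
         \<le> 4 * pi * (\<Sum>\<^sub>\<infinity>m\<in>M. \<bar>real_of_int (a1 + D * m)\<bar> powr - 2) * Im z powr - 2
           + 2 * norm (eisenstein_correction_integral 0) / real_of_int D ^ 2 * inverse (Im z)"
proof -
  define W where "W m = 4 * pi * Im z powr - 2 * \<bar>real_of_int (a1 + D * m)\<bar> powr - 2" for m
  have row_le: "norm (eisenstein_row_sum 0 z a1 a2 D m) \<le> W m" if "m \<in> M" for m
    using eisenstein_row_sum_estimate(2)[OF D y _ order_refl zero_le_one, of a1 m a2] that y
    by (simp add: W_def M_def powr_mult eisenstein_row_main_term_def)
  have W: "W summable_on M"
    unfolding W_def M_def by (intro summable_on_cmult_right nonzero_int_arith_prog_zeta(1)[OF D]) simp
  have summ: "(\<lambda>m. norm (eisenstein_row_sum 0 z a1 a2 D m)) summable_on M"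
    using row_le by (intro Infinite_Sum.abs_summable_on_comparison_test'[OF W]) auto
  have "norm (\<Sum>\<^sub>\<infinity>m\<in>M. eisenstein_row_sum 0 z a1 a2 D m) \<le> (\<Sum>\<^sub>\<infinity>m\<in>M. W m)"
    using norm_infsum_bound[OF summ] infsum_mono[OF summ W row_le] by linarith
  also have "\<dots> = 4 * pi * (\<Sum>\<^sub>\<infinity>m\<in>M. \<bar>real_of_int (a1 + D * m)\<bar> powr - 2) * Im z powr - 2"
    unfolding W_def by (subst infsum_cmult_right') (simp add: mult_ac)
  finally have "norm (\<Sum>\<^sub>\<infinity>m\<in>M. eisenstein_row_sum 0 z a1 a2 D m)
      \<le> 4 * pi * (\<Sum>\<^sub>\<infinity>m\<in>M. \<bar>real_of_int (a1 + D * m)\<bar> powr - 2) * Im z powr - 2" .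
  moreover have "norm (2 * of_real (1 / (real_of_int D ^ 2 * Im z)) * eisenstein_correction_integral 0)
      = 2 * norm (eisenstein_correction_integral 0) / real_of_int D ^ 2 * inverse (Im z)"
    unfolding norm_mult norm_of_real using y by (simp add: divide_inverse)
  ultimately show ?thesis
    using norm_triangle_ineq4[of "\<Sum>\<^sub>\<infinity>m\<in>M. eisenstein_row_sum 0 z a1 a2 D m"
        "2 * of_real (1 / (real_of_int D ^ 2 * Im z)) * eisenstein_correction_integral 0"] by linarith
qed

theorem lemma1p7:
  fixes a1 a2 D :: int
  assumes "D \<noteq> 0"
  shows "\<exists>L :: complex \<Rightarrow> complex.
           (\<forall>z. Im z > 0 \<longrightarrow> ((\<lambda>eps. sigma_eps eps z a1 a2 D) \<longlongrightarrow> L z) (at_right 0))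
         \<and> (L \<longlongrightarrow> 0) (filtercomap Im at_top)"
proof (intro exI conjI allI impI)
  define M where "M = {m. a1 + D * m \<noteq> 0}"
  define L where "L z = (\<Sum>\<^sub>\<infinity>m\<in>M. eisenstein_row_sum 0 z a1 a2 D m)
      - 2 * of_real (1 / (real_of_int D ^ 2 * Im z)) * eisenstein_correction_integral 0" for z
  define C1 where "C1 = 4 * pi * (\<Sum>\<^sub>\<infinity>m\<in>M. \<bar>real_of_int (a1 + D * m)\<bar> powr - 2)"
  define C2 where "C2 = 2 * norm (eisenstein_correction_integral 0) / real_of_int D ^ 2"
  show "((\<lambda>eps. sigma_eps eps z a1 a2 D) \<longlongrightarrow> L z) (at_right 0)" if "Im z > 0" for z
    unfolding L_def M_def by (rule tendsto_sigma_eps[OF assms that])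
  have "((\<lambda>y. C1 * y powr - 2 + C2 * inverse y) \<longlongrightarrow> C1 * 0 + C2 * 0) at_top"
    by (intro tendsto_intros tendsto_neg_powr filterlim_ident tendsto_inverse_0_at_top) auto
  then have "((\<lambda>z. C1 * Im z powr - 2 + C2 * inverse (Im z)) \<longlongrightarrow> 0) (filtercomap Im at_top)"
    using filterlim_compose[OF _ filterlim_filtercomap] by fastforce
  moreover have "\<forall>\<^sub>F z in filtercomap Im at_top. norm (L z) \<le> C1 * Im z powr - 2 + C2 * inverse (Im z)"
    using eventually_filtercomapI[OF eventually_gt_at_top[of 0], of Im]
    by eventually_elim (use norm_sigma_eps_limit_le[OF assms] in \<open>simp add: L_def C1_def C2_def M_def\<close>)
  ultimately show "(L \<longlongrightarrow> 0) (filtercomap Im at_top)"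
    by (rule Lim_null_comparison[rotated])
qed

end
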